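(* Let $a=p/q\geq1$ be rational with $p,q$ coprime, and let $(d,e;m)\in\mathcal{E}$. Define the error vector $\varepsilon$ by $m=\frac{d+e}{\sqrt{2a}}\,w(a)+\varepsilon$ (vectors padded with zeros to a common length). Then: (i) $\mu(d,e;m)(a)\leq\frac{\sqrt{2de+1}\sqrt a}{d+e}$. In particular $\mu(d,d;m)(a)\leq\sqrt{1+\frac{1}{2d^2}}\sqrt{\frac a2}$, and if $e=d-1$ then $\mu(d,e;m)(a)\leq\sqrt{1+\frac{1}{(2d-1)^2}}\sqrt{\frac a2}$. (ii) $\mu(d,e;m)(a)>\sqrt{a/2}$ if and only if $\langle\varepsilon,w(a)\rangle>0$. (iii) If $e=d$ and $\mu(d,e;m)(a)>\sqrt{a/2}$, then $\langle\varepsilon,\varepsilon\rangle<1$; if $e=d-1$ and $\mu(d,e;m)(a)>\sqrt{a/2}$, then $\langle\varepsilon,\varepsilon\rangle<\frac12$. (iv) The sum of all entries of $\varepsilon$ satisfies $-\sum_i\varepsilon_i=\frac{d+e}{\sqrt{2a}}\left(y(a)-\frac1q\right)+1$, where $y(a):=a+1-2\sqrt{2a}$.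
   Context: Weight expansion: for rational $a=p/q\geq1$ in lowest terms with continued fraction $[l_0;l_1,\dots,l_N]$ ($l_N\geq2$ if $N\geq1$), $w(a)=(1^{\times l_0},x_1^{\times l_1},\dots,x_N^{\times l_N})$ with $x_0=1$, $x_1=a-l_0$, $x_i=x_{i-2}-l_{i-1}x_{i-1}$; $x^{\times l}$ is $x$ repeated $l$ times. The set $\mathcal{E}$: a Cremona transform of an integer tuple $(\delta;n_1,\dots,n_k)$ with $n_1\geq\dots\geq n_k$ is $(2\delta-n_1-n_2-n_3;\delta-n_2-n_3,\delta-n_1-n_3,\delta-n_1-n_2,n_4,\dots,n_k)$; a Cremona move is a Cremona transform followed by a permutation of the entries after the semicolon. $\mathcal{E}$ consists of $(0,0;-1)$ together with all integer tuples $(d,e;m_1,\dots,m_M)$ with $d,e\geq0$, $m_1\geq\dots\geq m_M\geq0$, satisfying $\sum m_i=2(d+e)-1$, $\sum m_i^2=2de+1$, and such that $(d+e-m_1;d-m_1,e-m_1,m_2,\dots,m_M)$ reduces to $(0;-1,0,\dots,0)$ by repeated Cremona moves. $\mu(d,e;m)(a):=\langle m,w(a)\rangle/(d+e)$, with $\langle\cdot,\cdot\rangle$ the Euclidean scalar product after padding with zeros. *)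

theory Defs
  imports Complex_Main "HOL-Library.Multiset"
begin

text \<open>Continued fraction [l_0; l_1, ..., l_N] of p/q via the Euclidean algorithm.
  For coprime p, q with q > 0 this is the expansion with l_N >= 2 if N >= 1.\<close>
function cf_nat :: "nat \<Rightarrow> nat \<Rightarrow> nat list" where
  "cf_nat p q = (if q = 0 then [] else (p div q) # cf_nat q (p mod q))"
  by auto
termination by (relation "measure snd") auto

declare cf_nat.simps[simp del]

definition cf :: "rat \<Rightarrow> nat list" where
  "cf a = (case quotient_of a of (p, q) \<Rightarrow> cf_nat (nat p) (nat q))"

fun wx :: "real \<Rightarrow> nat list \<Rightarrow> nat \<Rightarrow> real" where
  "wx a ls 0 = 1"
| "wx a ls (Suc 0) = a - real (ls ! 0)"
| "wx a ls (Suc (Suc i)) = wx a ls i - real (ls ! Suc i) * wx a ls (Suc i)"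

definition weight_exp :: "rat \<Rightarrow> real list" where
  "weight_exp a = (let ls = cf a in
     concat (map (\<lambda>i. replicate (ls ! i) (wx (real_of_rat a) ls i)) [0..<length ls]))"

definition pad_nth :: "real list \<Rightarrow> nat \<Rightarrow> real" where
  "pad_nth xs i = (if i < length xs then xs ! i else 0)"

definition inner_pad :: "real list \<Rightarrow> real list \<Rightarrow> real" where
  "inner_pad xs ys = (\<Sum>i < max (length xs) (length ys). pad_nth xs i * pad_nth ys i)"

definition cremona_transform :: "int \<times> int list \<Rightarrow> int \<times> int list" where
  "cremona_transform t = (case t of (\<delta>, n) \<Rightarrow>
     (2*\<delta> - n!0 - n!1 - n!2,
      [\<delta> - n!1 - n!2, \<delta> - n!0 - n!2, \<delta> - n!0 - n!1] @ drop 3 n))"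

text \<open>A Cremona move (transform followed by permutation) is a composite of such steps.\<close>
inductive cremona_step :: "int \<times> int list \<Rightarrow> int \<times> int list \<Rightarrow> bool" where
  perm: "mset (n'::int list) = mset n \<Longrightarrow> cremona_step (\<delta>, n) (\<delta>, n')"
| transf: "sorted_wrt (\<ge>) (n::int list) \<Longrightarrow> length n \<ge> 3 \<Longrightarrow> cremona_step (\<delta>, n) (cremona_transform (\<delta>, n))"

definition cremona_reduces :: "int \<times> int list \<Rightarrow> bool" where
  "cremona_reduces t \<longleftrightarrow> cremona_step\<^sup>*\<^sup>* t (0, (-1) # replicate (length (snd t) - 1) 0)"

definition classE :: "(int \<times> int \<times> int list) set" where
  "classE = {(0, 0, [-1])} \<union>
     {(d, e, m). d \<ge> 0 \<and> e \<ge> 0 \<and> m \<noteq> [] \<and> sorted_wrt (\<ge>) m \<and> (\<forall>x\<in>set m. x \<ge> 0) \<and>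
        sum_list m = 2*(d+e) - 1 \<and> sum_list (map (\<lambda>x. x^2) m) = 2*d*e + 1 \<and>
        cremona_reduces (d + e - m!0, [d - m!0, e - m!0] @ tl m)}"

definition mu :: "int \<Rightarrow> int \<Rightarrow> int list \<Rightarrow> rat \<Rightarrow> real" where
  "mu d e m a = inner_pad (map real_of_int m) (weight_exp a) / real_of_int (d + e)"

definition err_vec :: "int \<Rightarrow> int \<Rightarrow> int list \<Rightarrow> rat \<Rightarrow> real list" where
  "err_vec d e m a =
     (let w = weight_exp a; m' = map real_of_int m;
          c = real_of_int (d + e) / sqrt (2 * real_of_rat a)
      in map (\<lambda>i. pad_nth m' i - c * pad_nth w i) [0..<max (length m') (length w)])"

definition yfun :: "real \<Rightarrow> real" where
  "yfun a = a + 1 - 2 * sqrt (2 * a)"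

end

theory Submission
  imports Defs "HOL-Analysis.Convex"
begin

text \<open>For a = p/q in lowest terms the weight expansion is the Euclidean algorithm in disguise:
  the weight x_i equals r_(i+1)/q, where r_0 = p, r_1 = q, r_2, ... are the successive remainders.
  The division identities r_k = l_k r_(k+1) + r_(k+2) telescope to
  \<Sum> l_k r_(k+1)^2 = pq and \<Sum> l_k r_(k+1) = p + q - 1, i.e. to \<langle>w,w\<rangle> = a and
  \<Sum> w = a + 1 - 1/q. Together with \<langle>m,m\<rangle> = 2de + 1 and \<Sum> m = 2(d+e) - 1, all four claims
  follow from Cauchy-Schwarz and from expanding \<epsilon> = m - c w, where c = (d+e)/\<surd>(2a)
  satisfies c a = (d+e)\<surd>(a/2) and c^2 a = (d+e)^2/2.\<close>

fun euclid_rem :: "nat \<Rightarrow> nat \<Rightarrow> nat \<Rightarrow> nat" where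
  "euclid_rem p q 0 = p"
| "euclid_rem p q (Suc k) = euclid_rem q (p mod q) k"

lemma euclid_rem_Suc_Suc:
  "euclid_rem p q (Suc (Suc k)) = euclid_rem p q k mod euclid_rem p q (Suc k)"
  by (induction k arbitrary: p q) auto

lemma euclid_rem_Suc_0 [simp]: "euclid_rem p q (Suc 0) = q"
  by simp

declare euclid_rem.simps(2)[simp del]

lemma cf_nat_nth:
  "k < length (cf_nat p q) \<Longrightarrow> cf_nat p q ! k = euclid_rem p q k div euclid_rem p q (Suc k)"
proof (induction p q arbitrary: k rule: cf_nat.induct)
  case (1 p q)
  then show ?case
    by (cases k) (auto simp: cf_nat.simps[of p q] euclid_rem.simps split: if_splits)
qed

lemma euclid_rem_Suc_length_cf_nat: "euclid_rem p q (Suc (length (cf_nat p q))) = 0"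
  by (induction p q rule: cf_nat.induct) (simp add: cf_nat.simps euclid_rem.simps)

lemma euclid_rem_length_cf_nat: "euclid_rem p q (length (cf_nat p q)) = gcd p q"
  by (induction p q rule: cf_nat.induct) (simp add: cf_nat.simps euclid_rem.simps gcd_red_nat[symmetric])

lemma euclid_rem_division:
  "k < length (cf_nat p q) \<Longrightarrow>
     euclid_rem p q k = cf_nat p q ! k * euclid_rem p q (Suc k) + euclid_rem p q (Suc (Suc k))"
  by (simp add: cf_nat_nth euclid_rem_Suc_Suc)

lemma sum_cf_nat_euclid_rem_upto:
  "n \<le> length (cf_nat p q) \<Longrightarrow>
     (\<Sum>k<n. cf_nat p q ! k * euclid_rem p q (Suc k)) + euclid_rem p q n + euclid_rem p q (Suc n) = p + q"
  by (induction n) (auto simp: euclid_rem_division)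

lemma sum_cf_nat_euclid_rem_sq_upto:
  "n \<le> length (cf_nat p q) \<Longrightarrow>
     (\<Sum>k<n. cf_nat p q ! k * euclid_rem p q (Suc k) ^ 2)
       + euclid_rem p q n * euclid_rem p q (Suc n) = p * q"
proof (induction n)
  case (Suc n)
  then show ?case
    using euclid_rem_division[of n p q] by (simp add: power2_eq_square algebra_simps)
qed simp

lemma sum_cf_nat_euclid_rem:
  "(\<Sum>k<length (cf_nat p q). cf_nat p q ! k * euclid_rem p q (Suc k)) + gcd p q = p + q"
  using sum_cf_nat_euclid_rem_upto[of "length (cf_nat p q)" p q]
  by (simp add: euclid_rem_length_cf_nat euclid_rem_Suc_length_cf_nat)

lemma sum_cf_nat_euclid_rem_sq:
  "(\<Sum>k<length (cf_nat p q). cf_nat p q ! k * euclid_rem p q (Suc k) ^ 2) = p * q"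
  using sum_cf_nat_euclid_rem_sq_upto[of "length (cf_nat p q)" p q]
  by (simp add: euclid_rem_Suc_length_cf_nat)

lemma wx_cf_nat:
  assumes "q > 0"
  shows "i \<le> length (cf_nat p q) \<Longrightarrow>
    wx (real p / real q) (cf_nat p q) i = real (euclid_rem p q (Suc i)) / real q"
proof (induction "real p / real q" "cf_nat p q" i rule: wx.induct)
  case 1
  then show ?case using assms by simp
next
  case 2
  have "0 < length (cf_nat p q)"
    using assms by (simp add: cf_nat.simps)
  from euclid_rem_division[OF this]
  have "real p = real (cf_nat p q ! 0) * real q + real (euclid_rem p q (Suc (Suc 0)))"
    by (simp flip: of_nat_mult of_nat_add)
  then show ?case using assms by (simp add: field_simps)
next
  case (3 i)
  have "real (euclid_rem p q (Suc i)) = real (cf_nat p q ! Suc i) * real (euclid_rem p q (Suc (Suc i)))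
      + real (euclid_rem p q (Suc (Suc (Suc i))))"
    using euclid_rem_division[of "Suc i" p q] 3(3) by (simp flip: of_nat_mult of_nat_add)
  then show ?case using 3 assms by (simp add: field_simps)
qed

lemma sum_list_concat_replicate:
  "sum_list (concat (map (\<lambda>i. replicate (ns ! i) (f i)) [0..<n])) = (\<Sum>i<n. of_nat (ns ! i) * f i)"
  by (induction n) (simp_all add: sum_list_replicate)

lemma quotient_of_nonneg:
  assumes "0 \<le> a"
  obtains p q where "quotient_of a = (int p, int q)" and "0 < q" and "coprime p q"
    and "real_of_rat a = real p / real q"
proof -
  obtain p q where pq: "quotient_of a = (p, q)" by fastforce
  have a: "a = of_int p / of_int q" and "0 < q" and "coprime p q"
    using quotient_of_div quotient_of_denom_pos quotient_of_coprime pq by blast+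
  moreover have "0 \<le> p" using assms a \<open>0 < q\<close> by (simp add: zero_le_divide_iff)
  ultimately show ?thesis
    using that[of "nat p" "nat q"] pq by (simp add: coprime_int_iff [symmetric] of_rat_divide)
qed

lemma weight_exp_euclid_rem:
  assumes "quotient_of a = (int p, int q)"
  shows "weight_exp a = concat (map (\<lambda>i. replicate (cf_nat p q ! i)
     (real (euclid_rem p q (Suc i)) / real q)) [0..<length (cf_nat p q)])"
proof -
  have "0 < q" and a: "real_of_rat a = real p / real q"
    using quotient_of_div[OF assms] quotient_of_denom_pos[OF assms] by (simp_all add: of_rat_divide)
  then show ?thesis
    by (auto simp: weight_exp_def cf_def assms a Let_def wx_cf_nat
        intro!: arg_cong[where f = concat] map_cong)
qed

lemma pad_nth_beyond: "length xs \<le> i \<Longrightarrow> pad_nth xs i = 0"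
  by (simp add: pad_nth_def)

lemma sum_list_eq_sum_pad_nth: "length xs \<le> N \<Longrightarrow> sum_list xs = (\<Sum>i<N. pad_nth xs i)"
proof -
  assume "length xs \<le> N"
  have "sum_list xs = (\<Sum>i<length xs. pad_nth xs i)"
    by (simp add: sum_list_sum_nth atLeast0LessThan pad_nth_def)
  also have "\<dots> = (\<Sum>i<N. pad_nth xs i)"
    using \<open>length xs \<le> N\<close> by (intro sum.mono_neutral_left) (auto simp: pad_nth_beyond)
  finally show ?thesis .
qed

lemma inner_pad_eq_sum_pad_nth:
  "length xs \<le> N \<Longrightarrow> length ys \<le> N \<Longrightarrow> inner_pad xs ys = (\<Sum>i<N. pad_nth xs i * pad_nth ys i)"
  unfolding inner_pad_def by (rule sum.mono_neutral_left) (auto simp: pad_nth_beyond)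

lemma inner_pad_self: "inner_pad xs xs = sum_list (map (\<lambda>x. x\<^sup>2) xs)"
  by (simp add: inner_pad_def sum_list_sum_nth atLeast0LessThan pad_nth_def power2_eq_square)

lemma inner_pad_Cauchy_Schwarz: "inner_pad xs ys \<le> sqrt (inner_pad xs xs) * sqrt (inner_pad ys ys)"
proof -
  define N where "N = max (length xs) (length ys)"
  have "(inner_pad xs ys)\<^sup>2 \<le> inner_pad xs xs * inner_pad ys ys"
    using Cauchy_Schwarz_ineq_sum[of "pad_nth xs" "pad_nth ys" "{..<N}"]
      inner_pad_eq_sum_pad_nth[of xs N xs] inner_pad_eq_sum_pad_nth[of xs N ys]
      inner_pad_eq_sum_pad_nth[of ys N ys]
    by (simp add: N_def power2_eq_square)
  then show ?thesis by (simp add: real_le_rsqrt flip: real_sqrt_mult)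
qed

lemma inner_pad_nonpos:
  "(\<forall>x\<in>set xs. x \<le> 0) \<Longrightarrow> (\<forall>y\<in>set ys. 0 \<le> y) \<Longrightarrow> inner_pad xs ys \<le> 0"
  unfolding inner_pad_def pad_nth_def by (intro sum_nonpos) (simp add: mult_nonpos_nonneg)

lemma inner_pad_weight_exp_self:
  assumes "0 \<le> a"
  shows "inner_pad (weight_exp a) (weight_exp a) = real_of_rat a"
proof -
  obtain p q where "quotient_of a = (int p, int q)" and "0 < q"
    and a: "real_of_rat a = real p / real q"
    using quotient_of_nonneg[OF assms] by blast
  then have "inner_pad (weight_exp a) (weight_exp a)
      = (\<Sum>k<length (cf_nat p q). real (cf_nat p q ! k * euclid_rem p q (Suc k) ^ 2)) / real q ^ 2"
    by (simp add: inner_pad_self weight_exp_euclid_rem map_concat o_def sum_list_concat_replicate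
        sum_divide_distrib power_divide)
  also have "\<dots> = real_of_rat a"
    using \<open>0 < q\<close>
    by (simp only: of_nat_sum[symmetric] sum_cf_nat_euclid_rem_sq a) (simp add: power2_eq_square)
  finally show ?thesis .
qed

lemma sum_list_weight_exp:
  assumes "quotient_of a = (p, q)" and "0 \<le> a"
  shows "sum_list (weight_exp a) = real_of_rat a + 1 - 1 / real_of_int q"
proof -
  obtain P Q where PQ: "quotient_of a = (int P, int Q)" and "0 < Q" "coprime P Q"
    and a: "real_of_rat a = real P / real Q"
    using quotient_of_nonneg[OF assms(2)] .
  have "sum_list (weight_exp a)
      = (\<Sum>k<length (cf_nat P Q). real (cf_nat P Q ! k * euclid_rem P Q (Suc k))) / real Q"
    by (simp add: PQ weight_exp_euclid_rem sum_list_concat_replicate sum_divide_distrib)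
  also have "\<dots> = (real P + real Q - 1) / real Q"
    using arg_cong[OF sum_cf_nat_euclid_rem[of P Q], of real] \<open>coprime P Q\<close> by simp
  also have "\<dots> = real_of_rat a + 1 - 1 / real_of_int q"
    using assms(1) PQ \<open>0 < Q\<close> a by (simp add: field_simps)
  finally show ?thesis .
qed

lemma weight_exp_nonneg:
  assumes "0 \<le> a" and "x \<in> set (weight_exp a)"
  shows "0 \<le> x"
proof -
  obtain p q where "quotient_of a = (int p, int q)"
    using quotient_of_nonneg[OF assms(1)] by blast
  then show ?thesis
    using assms(2) by (auto simp: weight_exp_euclid_rem)
qed

lemma classE_sums:
  assumes "(d, e, m) \<in> classE"
  shows "0 \<le> d" and "0 \<le> e" and "sum_list m = 2 * (d + e) - 1"
    and "sum_list (map (\<lambda>x. x\<^sup>2) m) = 2 * d * e + 1"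
  using assms unfolding classE_def by auto

lemma classE_degree_zero:
  assumes "(d, e, m) \<in> classE" and "d + e = 0"
  shows "m = [-1]"
proof (rule ccontr)
  assume "m \<noteq> [-1]"
  then have "\<forall>x\<in>set m. 0 \<le> x" and "sum_list m = 2 * (d + e) - 1"
    using assms(1) unfolding classE_def by auto
  then show False using assms(2) sum_list_nonneg[of m] by simp
qed

lemma real_sqrt_half: "sqrt (x / 2) = sqrt (2 * x) / 2"
proof -
  have "sqrt (x / 2) = sqrt (2 * x / 2\<^sup>2)"
    by (simp add: power2_eq_square)
  then show ?thesis
    by (simp only: real_sqrt_divide real_sqrt_abs)
qed

lemma real_divide_sqrt_double: "0 \<le> x \<Longrightarrow> x / sqrt (2 * x) = sqrt (x / 2)"
proof (cases "x = 0")
  case False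
  assume "0 \<le> x"
  then have "sqrt (2 * x) * sqrt (2 * x) = 2 * x" by simp
  then show ?thesis using False by (simp add: real_sqrt_half field_simps)
qed simp

lemma real_sqrt_mult_divide_pos: "0 < k \<Longrightarrow> sqrt x * sqrt y / k = sqrt (x * y / k\<^sup>2)"
  by (simp add: real_sqrt_mult real_sqrt_divide)

lemma length_err_vec: "length (err_vec d e m a) = max (length m) (length (weight_exp a))"
  by (simp add: err_vec_def Let_def)

lemma pad_nth_err_vec:
  "pad_nth (err_vec d e m a) i = pad_nth (map real_of_int m) i
     - real_of_int (d + e) / sqrt (2 * real_of_rat a) * pad_nth (weight_exp a) i"
  by (auto simp: err_vec_def Let_def pad_nth_def)

lemma
  fixes d e :: int and m :: "int list" and a :: rat
  defines "M \<equiv> map real_of_int m" and "w \<equiv> weight_exp a"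
    and "c \<equiv> real_of_int (d + e) / sqrt (2 * real_of_rat a)"
  shows inner_pad_err_vec_weight_exp:
      "inner_pad (err_vec d e m a) w = inner_pad M w - c * inner_pad w w"
    and inner_pad_err_vec_self:
      "inner_pad (err_vec d e m a) (err_vec d e m a)
         = inner_pad M M - 2 * c * inner_pad M w + c\<^sup>2 * inner_pad w w"
    and sum_list_err_vec: "sum_list (err_vec d e m a) = sum_list M - c * sum_list w"
proof -
  define N where "N = max (length m) (length w)"
  have len: "length (err_vec d e m a) \<le> N" "length M \<le> N" "length w \<le> N"
    by (simp_all add: N_def M_def w_def length_err_vec)
  have err: "pad_nth (err_vec d e m a) i = pad_nth M i - c * pad_nth w i" for i
    by (simp add: pad_nth_err_vec M_def w_def c_def)
  show "inner_pad (err_vec d e m a) w = inner_pad M w - c * inner_pad w w"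
    using len by (simp add: inner_pad_eq_sum_pad_nth[of _ N] err algebra_simps
        sum_subtractf sum_distrib_left)
  show "inner_pad (err_vec d e m a) (err_vec d e m a)
      = inner_pad M M - 2 * c * inner_pad M w + c\<^sup>2 * inner_pad w w"
    using len by (simp add: inner_pad_eq_sum_pad_nth[of _ N] err algebra_simps power2_eq_square
        sum_subtractf sum.distrib sum_distrib_left)
  show "sum_list (err_vec d e m a) = sum_list M - c * sum_list w"
    using len by (simp add: sum_list_eq_sum_pad_nth[of _ N] err sum_subtractf sum_distrib_left)
qed

lemma inner_pad_classE_self:
  assumes "(d, e, m) \<in> classE"
  shows "inner_pad (map real_of_int m) (map real_of_int m) = real_of_int (2 * d * e + 1)"
proof -
  have "map (\<lambda>x. x\<^sup>2) (map real_of_int m) = map of_int (map (\<lambda>x. x\<^sup>2) m)"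
    by simp
  then show ?thesis
    by (simp only: inner_pad_self sum_list_of_int classE_sums(4)[OF assms])
qed

lemma sum_list_classE:
  assumes "(d, e, m) \<in> classE"
  shows "sum_list (map real_of_int m) = real_of_int (2 * (d + e) - 1)"
  by (simp only: sum_list_of_int classE_sums(3)[OF assms])

lemma mu_le_sqrt:
  assumes "(d, e, m) \<in> classE" and "0 \<le> a"
  shows "mu d e m a \<le> sqrt (real_of_int (2 * d * e + 1)) * sqrt (real_of_rat a) / real_of_int (d + e)"
proof -
  have "inner_pad (map real_of_int m) (weight_exp a)
      \<le> sqrt (real_of_int (2 * d * e + 1)) * sqrt (real_of_rat a)"
    using inner_pad_Cauchy_Schwarz
    by (metis inner_pad_classE_self[OF assms(1)] inner_pad_weight_exp_self[OF assms(2)])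
  moreover have "0 \<le> real_of_int (d + e)"
    using classE_sums(1,2)[OF assms(1)] by simp
  ultimately show ?thesis
    unfolding mu_def by (rule divide_right_mono)
qed

lemma mu_le_sqrt_diagonal:
  assumes "(d, d, m) \<in> classE" and "0 \<le> a"
  shows "mu d d m a \<le> sqrt (1 + 1 / (2 * real_of_int d ^ 2)) * sqrt (real_of_rat a / 2)"
proof (cases "d = 0")
  case True
  then show ?thesis by (simp add: mu_def assms(2))
next
  case False
  then have pos: "0 < real_of_int (d + d)" using classE_sums(1)[OF assms(1)] by simp
  note mu_le_sqrt[OF assms]
  also have "sqrt (real_of_int (2 * d * d + 1)) * sqrt (real_of_rat a) / real_of_int (d + d)
      = sqrt (real_of_int (2 * d * d + 1) * real_of_rat a / (real_of_int (d + d))\<^sup>2)"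
    using pos by (rule real_sqrt_mult_divide_pos)
  also have "real_of_int (2 * d * d + 1) * real_of_rat a / (real_of_int (d + d))\<^sup>2
      = (1 + 1 / (2 * real_of_int d ^ 2)) * (real_of_rat a / 2)"
    using False by (simp add: field_simps power2_eq_square)
  finally show ?thesis by (simp only: real_sqrt_mult)
qed

lemma mu_le_sqrt_subdiagonal:
  assumes "(d, d - 1, m) \<in> classE" and "0 \<le> a"
  shows "mu d (d - 1) m a \<le> sqrt (1 + 1 / (2 * real_of_int d - 1) ^ 2) * sqrt (real_of_rat a / 2)"
proof -
  define k where "k = 2 * real_of_int d - 1"
  have pos: "0 < k" using classE_sums(2)[OF assms(1)] by (simp add: k_def)
  have k: "real_of_int (d + (d - 1)) = k" "real_of_int (2 * d * (d - 1) + 1) = (k\<^sup>2 + 1) / 2"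
    by (simp_all add: k_def power2_eq_square algebra_simps)
  note mu_le_sqrt[OF assms]
  also have "sqrt (real_of_int (2 * d * (d - 1) + 1)) * sqrt (real_of_rat a) / real_of_int (d + (d - 1))
      = sqrt ((k\<^sup>2 + 1) / 2 * real_of_rat a / k\<^sup>2)"
    unfolding k using pos by (rule real_sqrt_mult_divide_pos)
  also have "(k\<^sup>2 + 1) / 2 * real_of_rat a / k\<^sup>2 = (1 + 1 / k\<^sup>2) * (real_of_rat a / 2)"
    using pos by (simp add: field_simps)
  finally show ?thesis by (simp only: real_sqrt_mult k_def)
qed

lemma mu_gt_sqrt_half_iff:
  assumes "(d, e, m) \<in> classE" and "0 \<le> a"
  shows "sqrt (real_of_rat a / 2) < mu d e m a
    \<longleftrightarrow> 0 < inner_pad (err_vec d e m a) (weight_exp a)"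
proof -
  define A where "A = real_of_rat a"
  define MW where "MW = inner_pad (map real_of_int m) (weight_exp a)"
  have "0 \<le> A" using assms(2) by (simp add: A_def)
  then have "real_of_int (d + e) / sqrt (2 * A) * A = real_of_int (d + e) * sqrt (A / 2)"
    by (simp flip: real_divide_sqrt_double)
  then have err:
    "inner_pad (err_vec d e m a) (weight_exp a) = MW - real_of_int (d + e) * sqrt (A / 2)"
    by (simp add: inner_pad_err_vec_weight_exp inner_pad_weight_exp_self[OF assms(2)] MW_def A_def)
  show ?thesis
  proof (cases "d + e = 0")
    case True
    \<comment> \<open>then (d, e; m) = (0, 0; -1), and mu is 0 because of the division by d + e = 0\<close>
    have "MW \<le> 0"
      unfolding MW_def classE_degree_zero[OF assms(1) True]
      by (rule inner_pad_nonpos) (auto intro: weight_exp_nonneg[OF assms(2)])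
    then show ?thesis using err True assms(2) by (simp add: mu_def A_def)
  next
    case False
    then have "0 < real_of_int (d + e)" using classE_sums(1,2)[OF assms(1)] by simp
    then show ?thesis using err by (simp add: mu_def MW_def A_def pos_less_divide_eq mult.commute)
  qed
qed

lemma inner_pad_err_vec_self_less:
  assumes "(d, e, m) \<in> classE" and "0 < a" and "sqrt (real_of_rat a / 2) < mu d e m a"
  shows "inner_pad (err_vec d e m a) (err_vec d e m a)
    < real_of_int (2 * d * e + 1) - real_of_int (d + e) ^ 2 / 2"
proof -
  define A where "A = real_of_rat a"
  define D where "D = real_of_int (d + e)"
  define t where "t = sqrt (2 * A)"
  define MW where "MW = inner_pad (map real_of_int m) (weight_exp a)"
  have "0 < A" and "0 < t" and t2: "t\<^sup>2 = 2 * A" using assms(2) by (simp_all add: t_def A_def)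
  have "0 \<le> sqrt (real_of_rat a / 2)" using assms(2) by simp
  then have "0 < mu d e m a" using assms(3) by linarith
  then have "0 < D"
    using classE_sums(1,2)[OF assms(1)] by (cases "d + e = 0") (auto simp: D_def mu_def)
  then have "D * (t / 2) < MW"
    using assms(3) by (simp add: mu_def D_def MW_def A_def t_def real_sqrt_half pos_less_divide_eq
        mult.commute)
  then have "D\<^sup>2 < 2 * (D / t) * MW"
    using \<open>0 < t\<close> \<open>0 < D\<close> by (simp add: field_simps power2_eq_square)
  moreover have "(D / t)\<^sup>2 * A = D\<^sup>2 / 2"
    using \<open>0 < A\<close> by (simp add: power_divide t2)
  ultimately show ?thesis
    using inner_pad_err_vec_self[of d e m a] inner_pad_classE_self[OF assms(1)]
      inner_pad_weight_exp_self[of a] assms(2)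
    by (simp add: D_def MW_def A_def t_def)
qed

lemma neg_sum_list_err_vec:
  assumes "(d, e, m) \<in> classE" and "quotient_of a = (p, q)" and "0 < a"
  shows "- sum_list (err_vec d e m a) =
    real_of_int (d + e) / sqrt (2 * real_of_rat a) * (yfun (real_of_rat a) - 1 / real_of_int q) + 1"
proof -
  define A where "A = real_of_rat a"
  have "0 < sqrt (2 * A)" using assms(3) by (simp add: A_def)
  then show ?thesis
    using sum_list_err_vec[of d e m a] sum_list_classE[OF assms(1)] sum_list_weight_exp[OF assms(2)]
      assms(3)
    by (simp add: yfun_def A_def field_simps)
qed

theorem lemma4p8:
  fixes p q d e :: int and m :: "int list" and a :: rat
  assumes "q > 0" and "coprime p q" and "a = of_int p / of_int q" and "a \<ge> 1"
    and "(d, e, m) \<in> classE"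
  shows "(mu d e m a \<le> sqrt (real_of_int (2*d*e + 1)) * sqrt (real_of_rat a) / real_of_int (d + e)
         \<and> (e = d \<longrightarrow> mu d e m a \<le> sqrt (1 + 1 / (2 * real_of_int d ^ 2)) * sqrt (real_of_rat a / 2))
         \<and> (e = d - 1 \<longrightarrow> mu d e m a \<le> sqrt (1 + 1 / (2 * real_of_int d - 1) ^ 2) * sqrt (real_of_rat a / 2)))
       \<and> (mu d e m a > sqrt (real_of_rat a / 2) \<longleftrightarrow> inner_pad (err_vec d e m a) (weight_exp a) > 0)
       \<and> (e = d \<and> mu d e m a > sqrt (real_of_rat a / 2) \<longrightarrow> inner_pad (err_vec d e m a) (err_vec d e m a) < 1)
       \<and> (e = d - 1 \<and> mu d e m a > sqrt (real_of_rat a / 2) \<longrightarrow> inner_pad (err_vec d e m a) (err_vec d e m a) < 1/2)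
       \<and> (- sum_list (err_vec d e m a) =
           real_of_int (d + e) / sqrt (2 * real_of_rat a) * (yfun (real_of_rat a) - 1 / real_of_int q) + 1)"
proof -
  have quot: "quotient_of a = (p, q)"
    using assms(1-3) by (simp add: Fract_of_int_quotient[symmetric] quotient_of_Fract)
  have "0 < a" using assms(4) by simp
  have "real_of_int (2 * d * e + 1) - real_of_int (d + e) ^ 2 / 2 = 1" if "e = d"
    unfolding that by (simp add: power2_eq_square algebra_simps)
  moreover have "real_of_int (2 * d * e + 1) - real_of_int (d + e) ^ 2 / 2 = 1 / 2" if "e = d - 1"
    unfolding that by (simp add: power2_eq_square field_simps)
  ultimately show ?thesis
    using mu_le_sqrt[OF assms(5)] mu_le_sqrt_diagonal[of d m a] mu_le_sqrt_subdiagonal[of d m a]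
      mu_gt_sqrt_half_iff[OF assms(5)] inner_pad_err_vec_self_less[OF assms(5) \<open>0 < a\<close>]
      neg_sum_list_err_vec[OF assms(5) quot \<open>0 < a\<close>]
      assms(5) \<open>0 < a\<close>
    by auto
qed

end
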